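(* For $n\ge3$, $\mathfrak a_{16}(n)=\{g\in\mathfrak{su}(2^n): g^T=-g\}=\mathfrak{so}(2^n)$.
   Context: Pauli matrices $I,X,Y,Z$; $A_jB_{j+1}$ denotes the length-$n$ Pauli string with $A$ at position $j$, $B$ at $j+1$, $I$ elsewhere. $\mathfrak{su}(N)$ is the Lie algebra of traceless skew-Hermitian matrices and $\mathfrak{so}(N)$ the real skew-symmetric ones. For a set $S$ of Pauli strings, $\mathrm{Lie}\langle S\rangle$ is the smallest real Lie subalgebra of $\mathfrak u(2^n)$ containing $\{iP:P\in S\}$. $\mathfrak a_{16}(n)=\mathrm{Lie}\langle X_jY_{j+1},Y_jX_{j+1},Y_jZ_{j+1},Z_jY_{j+1}:1\le j\le n-1\rangle$. *)

theory Defs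
  imports Complex_Main "Jordan_Normal_Form.Matrix"
begin

datatype pauli = PI | PX | PY | PZ

fun pauli_entry :: "pauli \<Rightarrow> nat \<Rightarrow> nat \<Rightarrow> complex" where
  "pauli_entry PI a b = (if a = b then 1 else 0)"
| "pauli_entry PX a b = (if a \<noteq> b then 1 else 0)"
| "pauli_entry PY a b = (if a = b then 0 else if a = 0 then - \<i> else \<i>)"
| "pauli_entry PZ a b = (if a \<noteq> b then 0 else if a = 0 then 1 else -1)"

definition bitof :: "nat \<Rightarrow> nat \<Rightarrow> nat" where
  "bitof r k = (r div 2 ^ k) mod 2"

(* Pauli string P_1 \<otimes> ... \<otimes> P_n (positions 1..n, position 1 = most significant
   tensor factor) as a 2^n x 2^n complex matrix *)
definition pauli_string :: "nat \<Rightarrow> (nat \<Rightarrow> pauli) \<Rightarrow> complex mat" where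
  "pauli_string n P = mat (2 ^ n) (2 ^ n)
     (\<lambda>(r, c). \<Prod>j\<in>{1..n}. pauli_entry (P j) (bitof r (n - j)) (bitof c (n - j)))"

definition two_site :: "nat \<Rightarrow> nat \<Rightarrow> pauli \<Rightarrow> pauli \<Rightarrow> complex mat" where
  "two_site n j A B = pauli_string n (\<lambda>k. if k = j then A else if k = j + 1 then B else PI)"

definition commutator :: "complex mat \<Rightarrow> complex mat \<Rightarrow> complex mat" where
  "commutator A B = A * B - B * A"

definition mtrace :: "complex mat \<Rightarrow> complex" where
  "mtrace A = (\<Sum>i<dim_row A. A $$ (i, i))"

definition u_alg :: "nat \<Rightarrow> complex mat set" where
  "u_alg N = {g \<in> carrier_mat N N. \<forall>i<N. \<forall>j<N. g $$ (i, j) = - cnj (g $$ (j, i))}"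

definition su_alg :: "nat \<Rightarrow> complex mat set" where
  "su_alg N = {g \<in> u_alg N. mtrace g = 0}"

definition so_alg :: "nat \<Rightarrow> complex mat set" where
  "so_alg N = {g \<in> carrier_mat N N. (\<forall>i<N. \<forall>j<N. g $$ (i, j) \<in> \<real>) \<and> transpose_mat g = - g}"

definition real_lie_subalgebra :: "nat \<Rightarrow> complex mat set \<Rightarrow> bool" where
  "real_lie_subalgebra N L \<longleftrightarrow> L \<subseteq> u_alg N \<and> 0\<^sub>m N N \<in> L
     \<and> (\<forall>A\<in>L. \<forall>B\<in>L. A + B \<in> L)
     \<and> (\<forall>A\<in>L. \<forall>c::real. of_real c \<cdot>\<^sub>m A \<in> L)
     \<and> (\<forall>A\<in>L. \<forall>B\<in>L. commutator A B \<in> L)"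

definition lie_gen :: "nat \<Rightarrow> complex mat set \<Rightarrow> complex mat set" where
  "lie_gen N S = \<Inter>{L. real_lie_subalgebra N L \<and> (\<forall>P\<in>S. \<i> \<cdot>\<^sub>m P \<in> L)}"

definition a16 :: "nat \<Rightarrow> complex mat set" where
  "a16 n = lie_gen (2 ^ n)
     (\<Union>j\<in>{1..n-1}. {two_site n j PX PY, two_site n j PY PX,
                       two_site n j PY PZ, two_site n j PZ PY})"

end

theory Submission
  imports Defs
begin

text \<open>
  Every matrix is a complex combination of Pauli strings P.  Transposition and complex conjugation
  both multiply P by (-1) to the number of Y's in P, so for a real antisymmetric matrix only the
  strings with an odd number of Y's survive, with coefficients in i\<real>; the corresponding matrices
  i P, among them the generators, lie in so(2^n).  Hence a16(n) \<subseteq> so(2^n).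

  Conversely, the commutator of anticommuting i P and i Q is a real multiple of i P Q.  Multiplying
  a string by an anticommuting generator on sites j, j+1 (or by one of the single Y's that the
  generators produce) changes only the two letters there, and these moves connect all pairs of
  letters within each of three classes: the nine pairs with an even number of Y's, {YI, XY, ZY}
  and {IY, YX, YZ}.  Sweeping from the right, and borrowing the site to the left when the last
  pair lies in the third class, every string with an odd number of Y's is connected to one
  supported on the first two sites, which is connected to a generator.
\<close>

section \<open>Binary digits\<close>

lemma bitof_less_2: "bitof r k < 2"
  by (simp add: bitof_def)

lemma bitof_eq_bit: "bitof r k = of_bool (bit r k)"
  by (simp add: bitof_def bit_iff_odd odd_iff_mod_2_eq_one)

lemma eq_if_bitof_eq:
  assumes "a < 2 ^ n" "b < 2 ^ n" and "\<forall>i<n. bitof a i = bitof b i"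
  shows "a = b"
proof (rule bit_eqI)
  fix i
  show "bit a i = bit b i"
  proof (cases "i < n")
    case True
    then have "of_bool (bit a i) = (of_bool (bit b i) :: nat)"
      using assms(3) by (simp flip: bitof_eq_bit)
    then show ?thesis by (cases "bit a i"; cases "bit b i") simp_all
  next
    case False
    then have "(2::nat) ^ n \<le> 2 ^ i" by simp
    then have "a < 2 ^ i" "b < 2 ^ i" using assms(1,2) by linarith+
    then show ?thesis by (simp add: bit_iff_odd)
  qed
qed

lemma bitof_rev_eq_iff:
  assumes "a < 2 ^ n" "b < 2 ^ n"
  shows "(\<forall>j\<in>{1..n}. bitof a (n - j) = bitof b (n - j)) \<longleftrightarrow> a = b"
proof
  assume "\<forall>j\<in>{1..n}. bitof a (n - j) = bitof b (n - j)"
  moreover have "n - i \<in> {1..n}" "n - (n - i) = i" if "i < n" for i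
    using that by auto
  ultimately have "bitof a i = bitof b i" if "i < n" for i
    using that by metis
  then show "a = b" using eq_if_bitof_eq[OF assms] by blast
qed simp

lemma prod_if_const:
  "finite A \<Longrightarrow> (\<Prod>j\<in>A. if Q j then (c::'a::comm_semiring_1) else 0) = (if \<forall>j\<in>A. Q j then c ^ card A else 0)"
  by (induction A rule: finite_induct) auto

lemma sum_bits_prod:
  fixes g :: "nat \<Rightarrow> nat \<Rightarrow> 'a::comm_semiring_1"
  shows "(\<Sum>k<2 ^ n. \<Prod>i<n. g i (bitof k i)) = (\<Prod>i<n. g i 0 + g i 1)"
proof (induction n)
  case 0
  then show ?case by simp
next
  case (Suc n)
  let ?M = "(2::nat) ^ n"
  let ?f = "\<lambda>k. \<Prod>i<Suc n. g i (bitof k i)"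
  have low: "?f k = g n 0 * (\<Prod>i<n. g i (bitof k i))" if "k < ?M" for k
    using that by (simp add: bitof_def mult.commute)
  have high: "?f (k + ?M) = g n 1 * (\<Prod>i<n. g i (bitof k i))" if "k < ?M" for k
  proof -
    have "bitof (k + ?M) i = bitof k i" if "i < n" for i
    proof -
      have "n = (n - Suc i) + 1 + i" using \<open>i < n\<close> by simp
      then have "(2::nat) ^ n = 2 ^ (n - Suc i) * 2 * 2 ^ i"
        by (metis power_add power_one_right)
      then show ?thesis by (simp add: bitof_def)
    qed
    moreover have "bitof (k + ?M) n = 1" using that by (simp add: bitof_def)
    ultimately show ?thesis by (simp add: mult.commute)
  qed
  have "(\<Sum>k<2 ^ Suc n. ?f k) = (\<Sum>k<?M. ?f k) + (\<Sum>k\<in>{?M..<?M + ?M}. ?f k)"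
    by (simp add: lessThan_atLeast0 mult_2 sum.atLeastLessThan_concat)
  also have "(\<Sum>k\<in>{?M..<?M + ?M}. ?f k) = (\<Sum>k<?M. ?f (k + ?M))"
    using sum.shift_bounds_nat_ivl[of ?f 0 ?M ?M] by (simp add: lessThan_atLeast0)
  also have "(\<Sum>k<?M. ?f k) = g n 0 * (\<Sum>k<?M. \<Prod>i<n. g i (bitof k i))"
    unfolding sum_distrib_left by (rule sum.cong) (use low in simp_all)
  also have "(\<Sum>k<?M. ?f (k + ?M)) = g n 1 * (\<Sum>k<?M. \<Prod>i<n. g i (bitof k i))"
    unfolding sum_distrib_left by (rule sum.cong) (use high in simp_all)
  finally show ?case
    using Suc by (simp add: algebra_simps)
qed

section \<open>Pauli matrices and Pauli strings\<close>

fun pauli_mult :: "pauli \<Rightarrow> pauli \<Rightarrow> pauli" where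
  "pauli_mult PI q = q"
| "pauli_mult PX PI = PX" | "pauli_mult PX PX = PI" | "pauli_mult PX PY = PZ" | "pauli_mult PX PZ = PY"
| "pauli_mult PY PI = PY" | "pauli_mult PY PX = PZ" | "pauli_mult PY PY = PI" | "pauli_mult PY PZ = PX"
| "pauli_mult PZ PI = PZ" | "pauli_mult PZ PX = PY" | "pauli_mult PZ PY = PX" | "pauli_mult PZ PZ = PI"

fun pauli_phase :: "pauli \<Rightarrow> pauli \<Rightarrow> complex" where
  "pauli_phase PX PY = \<i>" | "pauli_phase PY PX = - \<i>"
| "pauli_phase PY PZ = \<i>" | "pauli_phase PZ PY = - \<i>"
| "pauli_phase PZ PX = \<i>" | "pauli_phase PX PZ = - \<i>"
| "pauli_phase _ _ = 1"

definition pauli_anticommute :: "pauli \<Rightarrow> pauli \<Rightarrow> bool" where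
  "pauli_anticommute p q \<longleftrightarrow> p \<noteq> PI \<and> q \<noteq> PI \<and> p \<noteq> q"

definition comm_sign :: "pauli \<Rightarrow> pauli \<Rightarrow> complex" where
  "comm_sign p q = (if pauli_anticommute p q then -1 else 1)"

definition y_sign :: "pauli \<Rightarrow> complex" where
  "y_sign p = (if p = PY then -1 else 1)"

lemma UNIV_pauli: "(UNIV :: pauli set) = {PI, PX, PY, PZ}"
  using pauli.exhaust by auto

lemma finite_UNIV_pauli [simp]: "finite (UNIV :: pauli set)"
  by (simp add: UNIV_pauli)

lemma less_2_cases: "(a::nat) < 2 \<Longrightarrow> a = 0 \<or> a = 1"
  by auto

lemma pauli_entry_mult:
  assumes "a < 2" "b < 2"
  shows "(\<Sum>x<2. pauli_entry p a x * pauli_entry q x b) = pauli_phase p q * pauli_entry (pauli_mult p q) a b"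
  using less_2_cases[OF assms(1)] less_2_cases[OF assms(2)]
  by (cases p; cases q) (auto simp: numeral_2_eq_2)

lemma pauli_entry_transpose: "a < 2 \<Longrightarrow> b < 2 \<Longrightarrow> pauli_entry p b a = y_sign p * pauli_entry p a b"
  using less_2_cases[of a] less_2_cases[of b] by (cases p) (auto simp: y_sign_def)

lemma pauli_entry_cnj: "a < 2 \<Longrightarrow> b < 2 \<Longrightarrow> cnj (pauli_entry p a b) = y_sign p * pauli_entry p a b"
  using less_2_cases[of a] less_2_cases[of b] by (cases p) (auto simp: y_sign_def)

lemma pauli_entry_orthogonal:
  assumes "a < 2" "b < 2" "r < 2" "c < 2"
  shows "(\<Sum>p\<in>UNIV. cnj (pauli_entry p a b) * pauli_entry p r c) = (if a = r \<and> b = c then 2 else 0)"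
  using less_2_cases[OF assms(1)] less_2_cases[OF assms(2)] less_2_cases[OF assms(3)] less_2_cases[OF assms(4)]
  by (auto simp: UNIV_pauli)

lemma pauli_mult_commute: "pauli_mult p q = pauli_mult q p"
  by (cases p; cases q) auto

lemma pauli_mult_cancel_left [simp]: "pauli_mult g (pauli_mult g a) = a"
  by (cases g; cases a) auto

lemma comm_sign_pauli_mult [simp]: "comm_sign g (pauli_mult g a) = comm_sign g a"
  by (cases g; cases a) (auto simp: comm_sign_def pauli_anticommute_def)

lemma pauli_phase_swap: "pauli_phase q p = comm_sign p q * pauli_phase p q"
  by (cases p; cases q) (auto simp: comm_sign_def pauli_anticommute_def)

lemma pauli_phase_square: "pauli_phase p q * pauli_phase p q = comm_sign p q"
  by (cases p; cases q) (auto simp: comm_sign_def pauli_anticommute_def)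

definition string_mult :: "(nat \<Rightarrow> pauli) \<Rightarrow> (nat \<Rightarrow> pauli) \<Rightarrow> nat \<Rightarrow> pauli" where
  "string_mult P Q = (\<lambda>j. pauli_mult (P j) (Q j))"

definition string_phase :: "nat \<Rightarrow> (nat \<Rightarrow> pauli) \<Rightarrow> (nat \<Rightarrow> pauli) \<Rightarrow> complex" where
  "string_phase n P Q = (\<Prod>j\<in>{1..n}. pauli_phase (P j) (Q j))"

definition string_comm_sign :: "nat \<Rightarrow> (nat \<Rightarrow> pauli) \<Rightarrow> (nat \<Rightarrow> pauli) \<Rightarrow> complex" where
  "string_comm_sign n P Q = (\<Prod>j\<in>{1..n}. comm_sign (P j) (Q j))"

definition string_y_sign :: "nat \<Rightarrow> (nat \<Rightarrow> pauli) \<Rightarrow> complex" where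
  "string_y_sign n P = (\<Prod>j\<in>{1..n}. y_sign (P j))"

lemma pauli_string_carrier [simp]: "pauli_string n P \<in> carrier_mat (2 ^ n) (2 ^ n)"
  and pauli_string_dim [simp]: "dim_row (pauli_string n P) = 2 ^ n" "dim_col (pauli_string n P) = 2 ^ n"
  by (auto simp: pauli_string_def)

lemma pauli_string_index:
  "r < 2 ^ n \<Longrightarrow> c < 2 ^ n \<Longrightarrow>
    pauli_string n P $$ (r, c) = (\<Prod>j\<in>{1..n}. pauli_entry (P j) (bitof r (n - j)) (bitof c (n - j)))"
  by (simp add: pauli_string_def)

lemma prod_atLeast1_atMost_rev: "(\<Prod>j\<in>{1..n}. h j) = (\<Prod>i<n. h (n - i :: nat))"
  by (rule prod.reindex_bij_witness[where i="\<lambda>j. n - j" and j="\<lambda>i. n - i"]) auto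

lemma prod_atLeast1_atMost_pair:
  fixes f :: "nat \<Rightarrow> 'a::comm_monoid_mult"
  assumes "1 \<le> j" "j < n"
  shows "(\<Prod>k\<in>{1..n}. f k) = f j * f (j + 1) * (\<Prod>k\<in>{1..n} - {j, j + 1}. f k)"
proof -
  have "(\<Prod>k\<in>{1..n}. f k) = (\<Prod>k\<in>{1..n} - {j, j + 1}. f k) * (\<Prod>k\<in>{j, j + 1}. f k)"
    by (rule prod.subset_diff) (use assms in auto)
  then show ?thesis by (simp add: mult_ac)
qed

lemma pauli_string_index_rev:
  assumes "r < 2 ^ n" "c < 2 ^ n"
  shows "pauli_string n P $$ (r, c) = (\<Prod>i<n. pauli_entry (P (n - i)) (bitof r i) (bitof c i))"
  unfolding pauli_string_index[OF assms] prod_atLeast1_atMost_rev[of _ n] by simp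

lemma pauli_string_cong:
  "(\<And>j. 1 \<le> j \<Longrightarrow> j \<le> n \<Longrightarrow> P j = Q j) \<Longrightarrow> pauli_string n P = pauli_string n Q"
  unfolding pauli_string_def by (intro arg_cong[where f="mat _ _"] ext) (auto intro!: prod.cong)

lemma pauli_string_mult:
  "pauli_string n P * pauli_string n Q = string_phase n P Q \<cdot>\<^sub>m pauli_string n (string_mult P Q)"
proof (rule eq_matI)
  fix r c assume "r < dim_row (string_phase n P Q \<cdot>\<^sub>m pauli_string n (string_mult P Q))"
    "c < dim_col (string_phase n P Q \<cdot>\<^sub>m pauli_string n (string_mult P Q))"
  then have r: "r < 2 ^ n" and c: "c < 2 ^ n" by auto
  let ?g = "\<lambda>i x. pauli_entry (P (n - i)) (bitof r i) x * pauli_entry (Q (n - i)) x (bitof c i)"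
  have "(pauli_string n P * pauli_string n Q) $$ (r, c)
      = (\<Sum>k<2 ^ n. pauli_string n P $$ (r, k) * pauli_string n Q $$ (k, c))"
    using r c by (simp add: scalar_prod_def lessThan_atLeast0)
  also have "\<dots> = (\<Sum>k<2 ^ n. \<Prod>i<n. ?g i (bitof k i))"
    using r c by (intro sum.cong) (auto simp: pauli_string_index_rev prod.distrib)
  also have "\<dots> = (\<Prod>i<n. ?g i 0 + ?g i 1)"
    by (rule sum_bits_prod)
  also have "\<dots> = (\<Prod>i<n. \<Sum>x<2. ?g i x)"
    by (simp add: numeral_2_eq_2)
  also have "\<dots> = (\<Prod>i<n. pauli_phase (P (n - i)) (Q (n - i))
                     * pauli_entry (pauli_mult (P (n - i)) (Q (n - i))) (bitof r i) (bitof c i))"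
    by (intro prod.cong refl pauli_entry_mult bitof_less_2)
  also have "\<dots> = (string_phase n P Q \<cdot>\<^sub>m pauli_string n (string_mult P Q)) $$ (r, c)"
    using r c unfolding string_phase_def prod_atLeast1_atMost_rev[of _ n]
    by (simp add: prod.distrib string_mult_def pauli_string_index_rev)
  finally show "(pauli_string n P * pauli_string n Q) $$ (r, c) = \<dots>" .
qed simp_all

lemma pauli_string_transpose_index:
  assumes "r < 2 ^ n" "c < 2 ^ n"
  shows "pauli_string n P $$ (c, r) = string_y_sign n P * pauli_string n P $$ (r, c)"
proof -
  have "pauli_string n P $$ (c, r)
      = (\<Prod>j\<in>{1..n}. y_sign (P j) * pauli_entry (P j) (bitof r (n - j)) (bitof c (n - j)))"
    unfolding pauli_string_index[OF assms(2,1)]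
    by (intro prod.cong refl pauli_entry_transpose bitof_less_2)
  then show ?thesis
    using assms by (simp add: pauli_string_index string_y_sign_def prod.distrib)
qed

lemma pauli_string_cnj_index:
  assumes "r < 2 ^ n" "c < 2 ^ n"
  shows "cnj (pauli_string n P $$ (r, c)) = string_y_sign n P * pauli_string n P $$ (r, c)"
proof -
  have "cnj (pauli_string n P $$ (r, c))
      = (\<Prod>j\<in>{1..n}. y_sign (P j) * pauli_entry (P j) (bitof r (n - j)) (bitof c (n - j)))"
    unfolding pauli_string_index[OF assms] cnj_prod
    by (intro prod.cong refl pauli_entry_cnj bitof_less_2)
  then show ?thesis
    using assms by (simp add: pauli_string_index string_y_sign_def prod.distrib)
qed

lemma string_y_sign_cases: "string_y_sign n P = 1 \<or> string_y_sign n P = -1"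
proof -
  have "finite A \<Longrightarrow> (\<Prod>j\<in>A. y_sign (P j)) \<in> {1, -1}" for A :: "nat set"
    by (induction A rule: finite_induct) (auto simp: y_sign_def)
  then show ?thesis unfolding string_y_sign_def by simp
qed

lemma string_y_sign_square: "string_y_sign n P * string_y_sign n P = 1"
  using string_y_sign_cases[of n P] by auto

lemma cnj_string_y_sign [simp]: "cnj (string_y_sign n P) = string_y_sign n P"
  using string_y_sign_cases[of n P] by auto

lemma pauli_string_orthogonal:
  assumes a: "a < 2 ^ n" and b: "b < 2 ^ n" and r: "r < 2 ^ n" and c: "c < 2 ^ n"
  shows "(\<Sum>P\<in>{1..n} \<rightarrow>\<^sub>E UNIV. cnj (pauli_string n P $$ (a, b)) * pauli_string n P $$ (r, c))
    = (if a = r \<and> b = c then 2 ^ n else 0)"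
proof -
  define f where "f j p = cnj (pauli_entry p (bitof a (n - j)) (bitof b (n - j)))
    * pauli_entry p (bitof r (n - j)) (bitof c (n - j))" for j p
  have "(\<Sum>P\<in>{1..n} \<rightarrow>\<^sub>E UNIV. cnj (pauli_string n P $$ (a, b)) * pauli_string n P $$ (r, c))
      = (\<Sum>P\<in>{1..n} \<rightarrow>\<^sub>E UNIV. \<Prod>j\<in>{1..n}. f j (P j))"
    using a b r c by (simp add: pauli_string_index f_def prod.distrib)
  also have "\<dots> = (\<Prod>j\<in>{1..n}. \<Sum>p\<in>UNIV. f j p)"
    by (simp add: prod_sum_PiE)
  also have "\<dots> = (\<Prod>j\<in>{1..n}. if bitof a (n - j) = bitof r (n - j) \<and> bitof b (n - j) = bitof c (n - j)
                                    then 2 else 0)"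
    unfolding f_def by (intro prod.cong refl pauli_entry_orthogonal bitof_less_2)
  also have "\<dots> = (if a = r \<and> b = c then 2 ^ n else 0)"
    using bitof_rev_eq_iff[OF a r] bitof_rev_eq_iff[OF b c] by (auto simp: prod_if_const)
  finally show ?thesis .
qed

lemma string_phase_swap: "string_phase n Q P = string_comm_sign n P Q * string_phase n P Q"
  unfolding string_phase_def string_comm_sign_def prod.distrib[symmetric]
  by (intro prod.cong refl pauli_phase_swap)

lemma string_phase_square: "string_phase n P Q * string_phase n P Q = string_comm_sign n P Q"
  unfolding string_phase_def string_comm_sign_def prod.distrib[symmetric]
  by (intro prod.cong refl pauli_phase_square)

lemma smult_i_mult_smult_i:
  fixes A B :: "complex mat"
  assumes "A \<in> carrier_mat N N" "B \<in> carrier_mat N N"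
  shows "(\<i> \<cdot>\<^sub>m A) * (\<i> \<cdot>\<^sub>m B) = \<i> \<cdot>\<^sub>m (\<i> \<cdot>\<^sub>m (A * B))"
  using assms by (simp add: mult_smult_assoc_mat[of A N N "\<i> \<cdot>\<^sub>m B" N] mult_smult_distrib[of A N N B N])

lemma commutator_anticommuting_strings:
  assumes "string_comm_sign n P Q = -1"
  shows "commutator (\<i> \<cdot>\<^sub>m pauli_string n P) (\<i> \<cdot>\<^sub>m pauli_string n Q)
    = (- 2 * string_phase n P Q) \<cdot>\<^sub>m pauli_string n (string_mult P Q)"
proof -
  let ?R = "pauli_string n (string_mult P Q)" and ?c = "string_phase n P Q"
  have "string_mult Q P = string_mult P Q"
    by (simp add: string_mult_def pauli_mult_commute)
  then have QP: "pauli_string n Q * pauli_string n P = (- ?c) \<cdot>\<^sub>m ?R"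
    using assms by (simp add: pauli_string_mult string_phase_swap[of n Q P])
  have "commutator (\<i> \<cdot>\<^sub>m pauli_string n P) (\<i> \<cdot>\<^sub>m pauli_string n Q)
      = \<i> \<cdot>\<^sub>m (\<i> \<cdot>\<^sub>m (?c \<cdot>\<^sub>m ?R)) - \<i> \<cdot>\<^sub>m (\<i> \<cdot>\<^sub>m ((- ?c) \<cdot>\<^sub>m ?R))"
    unfolding commutator_def smult_i_mult_smult_i[OF pauli_string_carrier pauli_string_carrier]
      pauli_string_mult[of n P Q] QP ..
  also have "\<dots> = (- 2 * ?c) \<cdot>\<^sub>m ?R"
    by (intro eq_matI) (simp_all add: algebra_simps)
  finally show ?thesis .
qed

lemma square_eq_minus_one_iff: "(z::complex) * z = -1 \<longleftrightarrow> z = \<i> \<or> z = - \<i>"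
proof
  assume "z * z = -1"
  then have "(z - \<i>) * (z + \<i>) = 0" by (simp add: algebra_simps)
  then show "z = \<i> \<or> z = - \<i>" by (auto simp: add_eq_0_iff2)
qed auto

section \<open>Real Lie subalgebras and so(N)\<close>

lemma real_lie_subalgebra_smult_closed:
  "real_lie_subalgebra N L \<Longrightarrow> A \<in> L \<Longrightarrow> of_real c \<cdot>\<^sub>m A \<in> L"
  and real_lie_subalgebra_add_closed:
  "real_lie_subalgebra N L \<Longrightarrow> A \<in> L \<Longrightarrow> B \<in> L \<Longrightarrow> A + B \<in> L"
  and real_lie_subalgebra_commutator_closed:
  "real_lie_subalgebra N L \<Longrightarrow> A \<in> L \<Longrightarrow> B \<in> L \<Longrightarrow> commutator A B \<in> L"
  and real_lie_subalgebra_zero: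
  "real_lie_subalgebra N L \<Longrightarrow> 0\<^sub>m N N \<in> L"
  by (simp_all add: real_lie_subalgebra_def)

lemma real_lie_subalgebra_sum_closed:
  assumes L: "real_lie_subalgebra N L" and "finite S" and "\<And>s. s \<in> S \<Longrightarrow> A s \<in> L"
  shows "mat N N (\<lambda>rc. \<Sum>s\<in>S. A s $$ rc) \<in> L"
  using assms(2,3)
proof (induction S rule: finite_induct)
  case empty
  have "mat N N (\<lambda>rc. \<Sum>s\<in>{}. A s $$ rc) = 0\<^sub>m N N" by (rule eq_matI) auto
  then show ?case using L by (simp add: real_lie_subalgebra_zero)
next
  case (insert x S)
  have "A x \<in> carrier_mat N N"
    using insert.prems L by (auto simp: real_lie_subalgebra_def u_alg_def)
  then have "mat N N (\<lambda>rc. \<Sum>s\<in>insert x S. A s $$ rc) = A x + mat N N (\<lambda>rc. \<Sum>s\<in>S. A s $$ rc)"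
    using insert.hyps by (intro eq_matI) auto
  then show ?case
    using insert L by (simp add: real_lie_subalgebra_add_closed)
qed

lemma real_lie_subalgebra_string_mult:
  assumes L: "real_lie_subalgebra N L"
    and P: "\<i> \<cdot>\<^sub>m pauli_string n P \<in> L" and Q: "\<i> \<cdot>\<^sub>m pauli_string n Q \<in> L"
    and anti: "string_comm_sign n P Q = -1"
  shows "\<i> \<cdot>\<^sub>m pauli_string n (string_mult P Q) \<in> L"
proof -
  let ?c = "string_phase n P Q"
  have "?c = \<i> \<or> ?c = - \<i>"
    using string_phase_square[of n P Q] anti by (simp add: square_eq_minus_one_iff)
  then obtain t :: real where t: "of_real t * (- 2 * ?c) = \<i>"
  proof
    assume "?c = \<i>"
    then show ?thesis by (intro that[of "- 1 / 2"]) simp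
  next
    assume "?c = - \<i>"
    then show ?thesis by (intro that[of "1 / 2"]) simp
  qed
  have "of_real t \<cdot>\<^sub>m commutator (\<i> \<cdot>\<^sub>m pauli_string n P) (\<i> \<cdot>\<^sub>m pauli_string n Q) \<in> L"
    using L P Q by (intro real_lie_subalgebra_smult_closed real_lie_subalgebra_commutator_closed)
  also have "of_real t \<cdot>\<^sub>m commutator (\<i> \<cdot>\<^sub>m pauli_string n P) (\<i> \<cdot>\<^sub>m pauli_string n Q)
      = \<i> \<cdot>\<^sub>m pauli_string n (string_mult P Q)"
    unfolding commutator_anticommuting_strings[OF anti]
    by (intro eq_matI) (simp_all add: t[symmetric] algebra_simps)
  finally show ?thesis .
qed

lemma lie_gen_eqI:
  assumes "real_lie_subalgebra N K" and "\<And>P. P \<in> S \<Longrightarrow> \<i> \<cdot>\<^sub>m P \<in> K"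
    and "\<And>L. real_lie_subalgebra N L \<Longrightarrow> \<forall>P\<in>S. \<i> \<cdot>\<^sub>m P \<in> L \<Longrightarrow> K \<subseteq> L"
  shows "lie_gen N S = K"
  using assms unfolding lie_gen_def by (intro antisym Inter_lower Inter_greatest) auto

lemma so_alg_iff:
  "g \<in> so_alg N \<longleftrightarrow>
    g \<in> carrier_mat N N \<and> (\<forall>i<N. \<forall>j<N. g $$ (i, j) \<in> \<real> \<and> g $$ (j, i) = - g $$ (i, j))"
proof -
  have "transpose_mat g = - g \<longleftrightarrow> (\<forall>i<N. \<forall>j<N. g $$ (j, i) = - g $$ (i, j))"
    if "g \<in> carrier_mat N N"
    using that by (auto simp: mat_eq_iff)
  then show ?thesis unfolding so_alg_def by blast
qed

lemma so_algI:
  assumes "g \<in> carrier_mat N N" "\<And>i j. i < N \<Longrightarrow> j < N \<Longrightarrow> g $$ (i, j) \<in> \<real>"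
    "\<And>i j. i < N \<Longrightarrow> j < N \<Longrightarrow> g $$ (j, i) = - g $$ (i, j)"
  shows "g \<in> so_alg N"
  using assms unfolding so_alg_iff by blast

lemma so_algD:
  assumes "g \<in> so_alg N"
  shows "g \<in> carrier_mat N N" "\<And>i j. i < N \<Longrightarrow> j < N \<Longrightarrow> g $$ (i, j) \<in> \<real>"
    "\<And>i j. i < N \<Longrightarrow> j < N \<Longrightarrow> g $$ (j, i) = - g $$ (i, j)"
  using assms unfolding so_alg_iff by blast+

lemma so_alg_subset_u_alg: "so_alg N \<subseteq> u_alg N"
proof
  fix g assume g: "g \<in> so_alg N"
  have "g $$ (i, j) = - cnj (g $$ (j, i))" if "i < N" "j < N" for i j
    using so_algD(2,3)[OF g that(2,1)] by (simp add: Reals_cnj_iff)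
  then show "g \<in> u_alg N" using so_algD(1)[OF g] unfolding u_alg_def by blast
qed

lemma so_alg_add_closed:
  assumes A: "A \<in> so_alg N" and B: "B \<in> so_alg N"
  shows "A + B \<in> so_alg N"
proof (rule so_algI)
  fix i j assume ij: "i < N" "j < N"
  show "(A + B) $$ (i, j) \<in> \<real>"
    using so_algD(1,2)[OF A] so_algD(1,2)[OF B] ij by simp
  show "(A + B) $$ (j, i) = - (A + B) $$ (i, j)"
    using so_algD(1)[OF A] so_algD(1)[OF B] so_algD(3)[OF A ij] so_algD(3)[OF B ij] ij by simp
qed (use so_algD(1)[OF A] so_algD(1)[OF B] in simp)

lemma so_alg_smult_closed:
  assumes A: "A \<in> so_alg N"
  shows "of_real c \<cdot>\<^sub>m A \<in> so_alg N"
proof (rule so_algI)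
  fix i j assume ij: "i < N" "j < N"
  show "(of_real c \<cdot>\<^sub>m A) $$ (i, j) \<in> \<real>"
    using so_algD(1,2)[OF A] ij by simp
  show "(of_real c \<cdot>\<^sub>m A) $$ (j, i) = - (of_real c \<cdot>\<^sub>m A) $$ (i, j)"
    using so_algD(1)[OF A] so_algD(3)[OF A ij] ij by simp
qed (use so_algD(1)[OF A] in simp)

lemma so_alg_commutator_closed:
  assumes A: "A \<in> so_alg N" and B: "B \<in> so_alg N"
  shows "commutator A B \<in> so_alg N"
proof -
  note A' = so_algD[OF A] and B' = so_algD[OF B]
  have real_prod: "(A * B) $$ (i, j) \<in> \<real>" "(B * A) $$ (i, j) \<in> \<real>" if "i < N" "j < N" for i j
    using A'(1) B'(1) that
    by (auto simp: scalar_prod_def intro!: sum_in_Reals Reals_mult A'(2) B'(2))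
  have swap_prod: "(A * B) $$ (j, i) = (B * A) $$ (i, j)" if "i < N" "j < N" for i j
  proof -
    have "A $$ (j, k) * B $$ (k, i) = B $$ (i, k) * A $$ (k, j)" if "k < N" for k
      using A'(3)[OF that \<open>j < N\<close>] B'(3)[OF \<open>i < N\<close> that] by simp
    then show ?thesis
      using A'(1) B'(1) that by (simp add: scalar_prod_def)
  qed
  show ?thesis
    unfolding commutator_def
  proof (rule so_algI)
    fix i j assume ij: "i < N" "j < N"
    show "(A * B - B * A) $$ (i, j) \<in> \<real>"
      using A'(1) B'(1) real_prod[OF ij] ij by (simp add: Reals_diff)
    show "(A * B - B * A) $$ (j, i) = - (A * B - B * A) $$ (i, j)"
      using A'(1) B'(1) swap_prod[OF ij] swap_prod[OF ij(2,1)] ij by simp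
  qed (use A'(1) B'(1) in auto)
qed

lemma so_alg_real_lie_subalgebra: "real_lie_subalgebra N (so_alg N)"
  unfolding real_lie_subalgebra_def
  by (auto simp: so_alg_subset_u_alg so_alg_add_closed so_alg_smult_closed so_alg_commutator_closed)
    (simp add: so_alg_iff)

lemma su_alg_antisymmetric_eq_so_alg: "{g \<in> su_alg N. transpose_mat g = - g} = so_alg N"
proof (intro equalityI subsetI)
  fix g assume "g \<in> {g \<in> su_alg N. transpose_mat g = - g}"
  then have u: "g \<in> u_alg N" and t: "transpose_mat g = - g" by (auto simp: su_alg_def)
  have c: "g \<in> carrier_mat N N" using u by (simp add: u_alg_def)
  have antisym: "g $$ (j, i) = - g $$ (i, j)" if "i < N" "j < N" for i j
  proof -
    have "transpose_mat g $$ (i, j) = (- g) $$ (i, j)" using t by simp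
    then show ?thesis using c that by simp
  qed
  have skew: "g $$ (i, j) = - cnj (g $$ (j, i))" if "i < N" "j < N" for i j
    using u that unfolding u_alg_def by blast
  have "g $$ (i, j) \<in> \<real>" if "i < N" "j < N" for i j
    using skew[OF that] antisym[OF that] by (simp add: Reals_cnj_iff)
  then show "g \<in> so_alg N" using c antisym by (intro so_algI)
next
  fix g assume g: "g \<in> so_alg N"
  have "g $$ (i, i) = 0" if "i < N" for i
    using so_algD(3)[OF g that that] by simp
  then have "mtrace g = 0"
    using so_algD(1)[OF g] by (simp add: mtrace_def)
  with g so_alg_subset_u_alg show "g \<in> {g \<in> su_alg N. transpose_mat g = - g}"
    by (auto simp: su_alg_def so_alg_def)
qed

section \<open>Pauli expansion of so(2^n)\<close>

definition pauli_coeff :: "nat \<Rightarrow> complex mat \<Rightarrow> (nat \<Rightarrow> pauli) \<Rightarrow> complex" where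
  "pauli_coeff n M P = (\<Sum>a<2 ^ n. \<Sum>b<2 ^ n. cnj (pauli_string n P $$ (a, b)) * M $$ (a, b)) / 2 ^ n"

lemma pauli_expansion:
  assumes r: "r < 2 ^ n" and c: "c < 2 ^ n"
  shows "M $$ (r, c) = (\<Sum>P\<in>{1..n} \<rightarrow>\<^sub>E UNIV. pauli_coeff n M P * pauli_string n P $$ (r, c))"
proof -
  let ?e = "\<lambda>a b. M $$ (a, b) / 2 ^ n"
  have "(\<Sum>P\<in>{1..n} \<rightarrow>\<^sub>E UNIV. pauli_coeff n M P * pauli_string n P $$ (r, c))
      = (\<Sum>P\<in>{1..n} \<rightarrow>\<^sub>E UNIV. \<Sum>a<2 ^ n. \<Sum>b<2 ^ n.
           ?e a b * (cnj (pauli_string n P $$ (a, b)) * pauli_string n P $$ (r, c)))"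
    unfolding pauli_coeff_def sum_divide_distrib sum_distrib_right
    by (intro sum.cong refl) (simp add: field_simps)
  also have "\<dots> = (\<Sum>a<2 ^ n. \<Sum>b<2 ^ n. \<Sum>P\<in>{1..n} \<rightarrow>\<^sub>E UNIV.
           ?e a b * (cnj (pauli_string n P $$ (a, b)) * pauli_string n P $$ (r, c)))"
    by (subst sum.swap) (rule sum.cong[OF refl], rule sum.swap)
  also have "\<dots> = (\<Sum>a<2 ^ n. \<Sum>b<2 ^ n. ?e a b *
      (\<Sum>P\<in>{1..n} \<rightarrow>\<^sub>E UNIV. cnj (pauli_string n P $$ (a, b)) * pauli_string n P $$ (r, c)))"
    by (simp add: sum_distrib_left)
  also have "\<dots> = (\<Sum>a<2 ^ n. \<Sum>b<2 ^ n. ?e a b * (if a = r \<and> b = c then 2 ^ n else 0))"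
    using r c by (intro sum.cong refl) (simp only: lessThan_iff pauli_string_orthogonal)
  also have "\<dots> = (\<Sum>a<2 ^ n. \<Sum>b<2 ^ n. if a = r \<and> b = c then M $$ (a, b) else 0)"
    by (intro sum.cong refl) simp
  also have "\<dots> = M $$ (r, c)"
  proof -
    have "(\<Sum>b<2 ^ n. if a = r \<and> b = c then M $$ (a, b) else 0) = (if a = r then M $$ (a, c) else 0)" for a
      using c by (cases "a = r") simp_all
    then show ?thesis using r by simp
  qed
  finally show ?thesis ..
qed

lemma pauli_coeff_of_real_entries:
  assumes "\<And>a b. a < 2 ^ n \<Longrightarrow> b < 2 ^ n \<Longrightarrow> M $$ (a, b) \<in> \<real>"
  shows "cnj (pauli_coeff n M P) = string_y_sign n P * pauli_coeff n M P"
proof -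
  have "cnj (cnj (pauli_string n P $$ (a, b)) * M $$ (a, b))
      = string_y_sign n P * (cnj (pauli_string n P $$ (a, b)) * M $$ (a, b))"
    if "a < 2 ^ n" "b < 2 ^ n" for a b
  proof -
    have "cnj (cnj (pauli_string n P $$ (a, b)) * M $$ (a, b)) = pauli_string n P $$ (a, b) * M $$ (a, b)"
      using assms[OF that] by (simp add: Reals_cnj_iff)
    also have "\<dots> = (string_y_sign n P * string_y_sign n P) * (pauli_string n P $$ (a, b) * M $$ (a, b))"
      by (simp add: string_y_sign_square)
    also have "\<dots> = string_y_sign n P * (cnj (pauli_string n P $$ (a, b)) * M $$ (a, b))"
      by (simp add: pauli_string_cnj_index[OF that])
    finally show ?thesis .
  qed
  then show ?thesis
    unfolding pauli_coeff_def by (simp add: sum_distrib_left)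
qed

lemma pauli_coeff_of_antisymmetric:
  assumes "\<And>a b. a < 2 ^ n \<Longrightarrow> b < 2 ^ n \<Longrightarrow> M $$ (b, a) = - M $$ (a, b)"
  shows "pauli_coeff n M P = - string_y_sign n P * pauli_coeff n M P"
proof -
  have "(\<Sum>a<2 ^ n. \<Sum>b<2 ^ n. cnj (pauli_string n P $$ (a, b)) * M $$ (a, b))
      = (\<Sum>a<2 ^ n. \<Sum>b<2 ^ n. cnj (pauli_string n P $$ (b, a)) * M $$ (b, a))"
    by (rule sum.swap)
  also have "\<dots> = (\<Sum>a<2 ^ n. \<Sum>b<2 ^ n. - string_y_sign n P * (cnj (pauli_string n P $$ (a, b)) * M $$ (a, b)))"
  proof (intro sum.cong refl)
    fix a b :: nat assume "a \<in> {..<2 ^ n}" "b \<in> {..<2 ^ n}"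
    then have ab: "a < 2 ^ n" "b < 2 ^ n" by simp_all
    show "cnj (pauli_string n P $$ (b, a)) * M $$ (b, a)
        = - string_y_sign n P * (cnj (pauli_string n P $$ (a, b)) * M $$ (a, b))"
      by (simp add: pauli_string_transpose_index[OF ab] assms[OF ab])
  qed
  also have "\<dots> = - string_y_sign n P * (\<Sum>a<2 ^ n. \<Sum>b<2 ^ n. cnj (pauli_string n P $$ (a, b)) * M $$ (a, b))"
    by (simp add: sum_distrib_left)
  finally have sum_eq: "(\<Sum>a<2 ^ n. \<Sum>b<2 ^ n. cnj (pauli_string n P $$ (a, b)) * M $$ (a, b))
      = - string_y_sign n P * (\<Sum>a<2 ^ n. \<Sum>b<2 ^ n. cnj (pauli_string n P $$ (a, b)) * M $$ (a, b))" .
  show ?thesis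
    unfolding pauli_coeff_def by (subst sum_eq) simp
qed

text \<open>Antisymmetry kills the coefficients of the strings with an even number of Y's; realness
  makes the remaining ones purely imaginary.\<close>
lemma so_alg_pauli_expansion:
  assumes g: "g \<in> so_alg (2 ^ n)" and r: "r < 2 ^ n" and c: "c < 2 ^ n"
  shows "g $$ (r, c) = (\<Sum>P\<in>{P \<in> {1..n} \<rightarrow>\<^sub>E UNIV. string_y_sign n P = -1}.
           of_real (Im (pauli_coeff n g P)) * (\<i> * pauli_string n P $$ (r, c)))"
proof -
  have coeff_term: "pauli_coeff n g P * pauli_string n P $$ (r, c)
      = (if string_y_sign n P = -1 then of_real (Im (pauli_coeff n g P)) * (\<i> * pauli_string n P $$ (r, c))
         else 0)" for P
  proof -
    have anti: "pauli_coeff n g P = - string_y_sign n P * pauli_coeff n g P"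
      using so_algD(3)[OF g] by (rule pauli_coeff_of_antisymmetric)
    have real: "cnj (pauli_coeff n g P) = string_y_sign n P * pauli_coeff n g P"
      using so_algD(2)[OF g] by (rule pauli_coeff_of_real_entries)
    show ?thesis
    proof (cases "string_y_sign n P = -1")
      case True
      then have "pauli_coeff n g P = \<i> * of_real (Im (pauli_coeff n g P))"
        using real by (simp add: complex_eq_iff)
      then show ?thesis using True by (simp add: mult_ac)
    next
      case False
      then have "string_y_sign n P = 1" using string_y_sign_cases by blast
      then show ?thesis using anti False by simp
    qed
  qed
  have "g $$ (r, c) = (\<Sum>P\<in>{1..n} \<rightarrow>\<^sub>E UNIV. pauli_coeff n g P * pauli_string n P $$ (r, c))"
    by (rule pauli_expansion[OF r c])
  also have "\<dots> = (\<Sum>P\<in>{1..n} \<rightarrow>\<^sub>E UNIV. if string_y_sign n P = -1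
      then of_real (Im (pauli_coeff n g P)) * (\<i> * pauli_string n P $$ (r, c)) else 0)"
    by (simp only: coeff_term)
  also have "\<dots> = (\<Sum>P\<in>{P \<in> {1..n} \<rightarrow>\<^sub>E UNIV. string_y_sign n P = -1}.
      of_real (Im (pauli_coeff n g P)) * (\<i> * pauli_string n P $$ (r, c)))"
    by (simp add: sum.inter_filter finite_PiE)
  finally show ?thesis .
qed

lemma so_alg_subset_if_odd_strings:
  assumes L: "real_lie_subalgebra (2 ^ n) L"
    and odd: "\<And>P. string_y_sign n P = -1 \<Longrightarrow> \<i> \<cdot>\<^sub>m pauli_string n P \<in> L"
  shows "so_alg (2 ^ n) \<subseteq> L"
proof
  fix g assume g: "g \<in> so_alg (2 ^ n)"
  define A where "A P = of_real (Im (pauli_coeff n g P)) \<cdot>\<^sub>m (\<i> \<cdot>\<^sub>m pauli_string n P)" for P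
  let ?odd = "{P \<in> {1..n} \<rightarrow>\<^sub>E UNIV. string_y_sign n P = -1}"
  have "g = mat (2 ^ n) (2 ^ n) (\<lambda>rc. \<Sum>P\<in>?odd. A P $$ rc)"
    using so_algD(1)[OF g] by (intro eq_matI) (auto simp: so_alg_pauli_expansion[OF g] A_def)
  also have "\<dots> \<in> L"
    using L odd by (intro real_lie_subalgebra_sum_closed) (auto simp: finite_PiE A_def
        intro: real_lie_subalgebra_smult_closed)
  finally show "g \<in> L" .
qed

lemma odd_string_in_so_alg:
  assumes "string_y_sign n P = -1"
  shows "\<i> \<cdot>\<^sub>m pauli_string n P \<in> so_alg (2 ^ n)"
proof (rule so_algI)
  fix r c :: nat assume rc: "r < 2 ^ n" "c < 2 ^ n"
  show "(\<i> \<cdot>\<^sub>m pauli_string n P) $$ (r, c) \<in> \<real>"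
    using rc pauli_string_cnj_index[OF rc, of P] assms by (simp add: Reals_cnj_iff)
  show "(\<i> \<cdot>\<^sub>m pauli_string n P) $$ (c, r) = - (\<i> \<cdot>\<^sub>m pauli_string n P) $$ (r, c)"
    using rc pauli_string_transpose_index[OF rc, of P] assms by simp
qed simp

section \<open>Two-site moves\<close>

definition two_site_string :: "nat \<Rightarrow> pauli \<Rightarrow> pauli \<Rightarrow> nat \<Rightarrow> pauli" where
  "two_site_string j a b = (\<lambda>k. if k = j then a else if k = j + 1 then b else PI)"

lemma two_site_eq_pauli_string: "two_site n j a b = pauli_string n (two_site_string j a b)"
  by (simp add: two_site_def two_site_string_def)

lemma string_comm_sign_two_site:
  assumes "1 \<le> j" "j < n"
  shows "string_comm_sign n (two_site_string j a b) w = comm_sign a (w j) * comm_sign b (w (j + 1))"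
proof -
  have "(\<Prod>k\<in>{1..n} - {j, j + 1}. comm_sign (two_site_string j a b k) (w k)) = 1"
    by (rule prod.neutral) (simp add: two_site_string_def comm_sign_def pauli_anticommute_def)
  then show ?thesis
    unfolding string_comm_sign_def prod_atLeast1_atMost_pair[OF assms]
    by (simp add: two_site_string_def)
qed

lemma string_mult_two_site:
  "string_mult (two_site_string j a b) w = w(j := pauli_mult a (w j), j + 1 := pauli_mult b (w (j + 1)))"
  by (auto simp: string_mult_def two_site_string_def)

lemma string_y_sign_fun_upd_pair:
  assumes "1 \<le> j" "j < n" and "y_sign a * y_sign b = y_sign (w j) * y_sign (w (j + 1))"
  shows "string_y_sign n (w(j := a, j + 1 := b)) = string_y_sign n w"
proof -
  have "(\<Prod>k\<in>{1..n} - {j, j + 1}. y_sign ((w(j := a, j + 1 := b)) k))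
      = (\<Prod>k\<in>{1..n} - {j, j + 1}. y_sign (w k))"
    by (rule prod.cong) auto
  then show ?thesis
    using assms(3) unfolding string_y_sign_def prod_atLeast1_atMost_pair[OF assms(1,2)] by simp
qed

lemma string_y_sign_two_site:
  "1 \<le> j \<Longrightarrow> j < n \<Longrightarrow> string_y_sign n (two_site_string j a b) = y_sign a * y_sign b"
  unfolding string_y_sign_def
  by (subst prod_atLeast1_atMost_pair[of j n]) (auto simp: two_site_string_def y_sign_def intro!: prod.neutral)

definition a16_generator_pairs :: "(pauli \<times> pauli) set" where
  "a16_generator_pairs = {(PX, PY), (PY, PX), (PY, PZ), (PZ, PY)}"

text \<open>The generators together with Y I and I Y, which they generate.\<close>
definition local_move_pairs :: "(pauli \<times> pauli) set" where
  "local_move_pairs = a16_generator_pairs \<union> {(PY, PI), (PI, PY)}"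

definition pair_move :: "pauli \<times> pauli \<Rightarrow> pauli \<times> pauli \<Rightarrow> bool" where
  "pair_move p q \<longleftrightarrow> (\<exists>(g, h)\<in>local_move_pairs.
     comm_sign g (fst p) * comm_sign h (snd p) = -1 \<and> q = (pauli_mult g (fst p), pauli_mult h (snd p)))"

text \<open>The orbits of pair_move on the pairs other than (I, I): the pairs with an even number of
  Y's form one orbit, those with an odd number split into two.\<close>
definition even_pairs :: "(pauli \<times> pauli) set" where
  "even_pairs = {(PI, PX), (PI, PZ), (PX, PI), (PX, PX), (PX, PZ), (PY, PY), (PZ, PI), (PZ, PX), (PZ, PZ)}"

definition left_odd_pairs :: "(pauli \<times> pauli) set" where
  "left_odd_pairs = {(PY, PI), (PX, PY), (PZ, PY)}"

definition right_odd_pairs :: "(pauli \<times> pauli) set" where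
  "right_odd_pairs = {(PI, PY), (PY, PX), (PY, PZ)}"

definition same_pair_class :: "pauli \<times> pauli \<Rightarrow> pauli \<times> pauli \<Rightarrow> bool" where
  "same_pair_class p q \<longleftrightarrow>
     (\<exists>K\<in>{even_pairs, left_odd_pairs, right_odd_pairs}. p \<in> K \<and> q \<in> K)"

lemma symp_pair_move: "symp pair_move"
proof (rule sympI)
  fix p q assume "pair_move p q"
  then obtain g h where gh: "(g, h) \<in> local_move_pairs"
    "comm_sign g (fst p) * comm_sign h (snd p) = -1" "q = (pauli_mult g (fst p), pauli_mult h (snd p))"
    unfolding pair_move_def by blast
  then show "pair_move q p"
    unfolding pair_move_def by (intro bexI[of _ "(g, h)"]) auto
qed

lemma pair_move_to_hub:
  shows "p \<in> even_pairs \<Longrightarrow> pair_move\<^sup>*\<^sup>* p (PX, PI)"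
    and "p \<in> left_odd_pairs \<Longrightarrow> pair_move\<^sup>*\<^sup>* p (PY, PI)"
    and "p \<in> right_odd_pairs \<Longrightarrow> pair_move\<^sup>*\<^sup>* p (PI, PY)"
proof -
  note move_defs = pair_move_def local_move_pairs_def a16_generator_pairs_def comm_sign_def
    pauli_anticommute_def
  have to_XI: "pair_move p (PX, PI)" if "p \<in> {(PZ, PX), (PZ, PZ), (PY, PY), (PZ, PI)}" for p
    using that by (auto simp: move_defs)
  have to_ZX: "pair_move p (PZ, PX)" if "p \<in> {(PI, PZ), (PX, PX)}" for p
    using that by (auto simp: move_defs)
  have to_ZZ: "pair_move p (PZ, PZ)" if "p \<in> {(PI, PX), (PX, PZ)}" for p
    using that by (auto simp: move_defs)
  have to_YI: "pair_move p (PY, PI)" if "p \<in> {(PX, PY), (PZ, PY)}" for p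
    using that by (auto simp: move_defs)
  have to_IY: "pair_move p (PI, PY)" if "p \<in> {(PY, PX), (PY, PZ)}" for p
    using that by (auto simp: move_defs)
  show "p \<in> even_pairs \<Longrightarrow> pair_move\<^sup>*\<^sup>* p (PX, PI)"
  proof -
    assume "p \<in> even_pairs"
    then consider "p = (PX, PI)" | "p \<in> {(PZ, PX), (PZ, PZ), (PY, PY), (PZ, PI)}"
      | "p \<in> {(PI, PZ), (PX, PX)}" | "p \<in> {(PI, PX), (PX, PZ)}"
      unfolding even_pairs_def by blast
    then show ?thesis
    proof cases
      case 3
      then show ?thesis using to_ZX to_XI
        by (meson converse_rtranclp_into_rtranclp insertCI r_into_rtranclp)
    next
      case 4
      then show ?thesis using to_ZZ to_XI
        by (meson converse_rtranclp_into_rtranclp insertCI r_into_rtranclp)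
    qed (use to_XI in auto)
  qed
  show "p \<in> left_odd_pairs \<Longrightarrow> pair_move\<^sup>*\<^sup>* p (PY, PI)"
    unfolding left_odd_pairs_def using to_YI by auto
  show "p \<in> right_odd_pairs \<Longrightarrow> pair_move\<^sup>*\<^sup>* p (PI, PY)"
    unfolding right_odd_pairs_def using to_IY by auto
qed

lemma pair_move_if_same_pair_class:
  assumes "same_pair_class p q"
  shows "pair_move\<^sup>*\<^sup>* p q"
proof -
  have sym: "pair_move\<^sup>*\<^sup>* q p \<Longrightarrow> pair_move\<^sup>*\<^sup>* p q" for p q
    using symp_rtranclp[OF symp_pair_move] by (meson sympD)
  from assms obtain h where "pair_move\<^sup>*\<^sup>* p h" "pair_move\<^sup>*\<^sup>* q h"
    unfolding same_pair_class_def using pair_move_to_hub by blast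
  then show ?thesis by (meson rtranclp_trans sym)
qed

lemma same_pair_class_y_sign:
  "same_pair_class p q \<Longrightarrow> y_sign (fst p) * y_sign (snd p) = y_sign (fst q) * y_sign (snd q)"
  unfolding same_pair_class_def even_pairs_def left_odd_pairs_def right_odd_pairs_def
  by (auto simp: y_sign_def)

lemma fun_upd_pair_twice: "(w(j := a, j + 1 := b))(j := c, j + 1 := d) = w(j := c, j + 1 := d)"
  by (simp add: fun_eq_iff)

section \<open>Lie algebras containing the generators\<close>

locale a16_closed =
  fixes n :: nat and L :: "complex mat set"
  assumes lie: "real_lie_subalgebra (2 ^ n) L"
    and generators: "\<And>j g h. 1 \<le> j \<Longrightarrow> j < n \<Longrightarrow> (g, h) \<in> a16_generator_pairs
      \<Longrightarrow> \<i> \<cdot>\<^sub>m pauli_string n (two_site_string j g h) \<in> L"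
begin

abbreviation contains :: "(nat \<Rightarrow> pauli) \<Rightarrow> bool" where
  "contains P \<equiv> \<i> \<cdot>\<^sub>m pauli_string n P \<in> L"

lemma contains_string_mult:
  "contains P \<Longrightarrow> contains Q \<Longrightarrow> string_comm_sign n P Q = -1 \<Longrightarrow> contains (string_mult P Q)"
  using real_lie_subalgebra_string_mult[OF lie] .

lemma contains_local_move:
  assumes j: "1 \<le> j" "j < n" and gh: "(g, h) \<in> local_move_pairs"
  shows "contains (two_site_string j g h)"
proof -
  have gen: "contains (two_site_string j g h)" if "(g, h) \<in> a16_generator_pairs" for g h
    using generators[OF j that] .
  have anti: "string_comm_sign n (two_site_string j PX PY) (two_site_string j PZ PY) = -1"
    "string_comm_sign n (two_site_string j PY PX) (two_site_string j PY PZ) = -1"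
    unfolding string_comm_sign_two_site[OF j]
    by (simp_all add: two_site_string_def comm_sign_def pauli_anticommute_def)
  have "contains (string_mult (two_site_string j PX PY) (two_site_string j PZ PY))"
    using gen anti(1) by (intro contains_string_mult) (simp_all add: a16_generator_pairs_def)
  moreover have "contains (string_mult (two_site_string j PY PX) (two_site_string j PY PZ))"
    using gen anti(2) by (intro contains_string_mult) (simp_all add: a16_generator_pairs_def)
  moreover have "string_mult (two_site_string j a b) (two_site_string j c d)
      = two_site_string j (pauli_mult a c) (pauli_mult b d)" for a b c d
    by (auto simp: string_mult_def two_site_string_def)
  ultimately show ?thesis
    using gh gen by (auto simp: local_move_pairs_def)
qed

lemma contains_pair_move:
  assumes w: "contains w" and j: "1 \<le> j" "j < n" and move: "pair_move (w j, w (j + 1)) (a, b)"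
  shows "contains (w(j := a, j + 1 := b))"
proof -
  obtain g h where gh: "(g, h) \<in> local_move_pairs"
    and anti: "comm_sign g (w j) * comm_sign h (w (j + 1)) = -1"
    and ab: "a = pauli_mult g (w j)" "b = pauli_mult h (w (j + 1))"
    using move unfolding pair_move_def by auto
  have "contains (string_mult (two_site_string j g h) w)"
    using contains_local_move[OF j gh] w anti
    by (intro contains_string_mult) (simp_all add: string_comm_sign_two_site[OF j])
  then show ?thesis by (simp add: string_mult_two_site ab)
qed

lemma contains_pair_class:
  assumes w: "contains w" and j: "1 \<le> j" "j < n" and cls: "same_pair_class (w j, w (j + 1)) (a, b)"
  shows "contains (w(j := a, j + 1 := b))"
proof -
  have "pair_move\<^sup>*\<^sup>* (w j, w (j + 1)) q \<Longrightarrow> contains (w(j := fst q, j + 1 := snd q))" for q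
  proof (induction rule: rtranclp_induct)
    case base
    then show ?case using w by simp
  next
    case (step q r)
    have "pair_move ((w(j := fst q, j + 1 := snd q)) j, (w(j := fst q, j + 1 := snd q)) (j + 1))
        (fst r, snd r)"
      using step.hyps(2) by simp
    from contains_pair_move[OF step.IH j this] show ?case by (simp only: fun_upd_pair_twice)
  qed
  from this[OF pair_move_if_same_pair_class[OF cls]] show ?thesis by simp
qed

lemma contains_if_pair_class:
  assumes "contains (w(j := a, j + 1 := b))" "1 \<le> j" "j < n" "same_pair_class (a, b) (w j, w (j + 1))"
  shows "contains w"
proof -
  have "contains ((w(j := a, j + 1 := b))(j := w j, j + 1 := w (j + 1)))"
    using assms(4) by (intro contains_pair_class[OF assms(1-3)]) simp
  moreover have "(w(j := a, j + 1 := b))(j := w j, j + 1 := w (j + 1)) = w"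
    by (simp add: fun_eq_iff)
  ultimately show ?thesis by simp
qed

lemma contains_last_pair_not_right_odd:
  assumes IH: "\<And>v. string_y_sign n v = -1 \<Longrightarrow> \<forall>j>m. v j = PI \<Longrightarrow> contains v"
    and m: "1 \<le> m" "m < n" and odd: "string_y_sign n w = -1" and supp: "\<forall>j>m + 1. w j = PI"
    and last: "w (m + 1) \<noteq> PI" and not_right: "(w m, w (m + 1)) \<notin> right_odd_pairs"
  shows "contains w"
proof -
  define t where "t = (if y_sign (w m) * y_sign (w (m + 1)) = 1 then (PX, PI) else (PY, PI))"
  have cls: "same_pair_class t (w m, w (m + 1))"
    using last not_right unfolding t_def same_pair_class_def
    by (cases "w m"; cases "w (m + 1)")
      (simp_all add: even_pairs_def left_odd_pairs_def right_odd_pairs_def y_sign_def)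
  have "string_y_sign n (w(m := fst t, m + 1 := snd t)) = -1"
    using string_y_sign_fun_upd_pair[OF m] same_pair_class_y_sign[OF cls] odd by simp
  moreover have "\<forall>j>m. (w(m := fst t, m + 1 := snd t)) j = PI"
    using supp by (simp add: t_def)
  ultimately have "contains (w(m := fst t, m + 1 := snd t))" by (rule IH)
  then show ?thesis
    by (rule contains_if_pair_class[of w m "fst t" "snd t"]) (use m cls in simp_all)
qed

lemma contains_last_pair_YX_or_YZ:
  assumes IH: "\<And>v. string_y_sign n v = -1 \<Longrightarrow> \<forall>j>k + 1. v j = PI \<Longrightarrow> contains v"
    and k: "1 \<le> k" "k + 1 < n" and odd: "string_y_sign n w = -1" and supp: "\<forall>j>k + 2. w j = PI"
    and mid: "w (k + 1) = PY" and last: "w (k + 2) = PX \<or> w (k + 2) = PZ"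
  shows "contains w"
proof -
  define t where "t = (if w k = PI then (PY, PX) else if w k = PY then (PX, PI) else (PY, PI))"
  have cls: "same_pair_class t (w k, w (k + 1))"
    unfolding t_def same_pair_class_def mid
    by (cases "w k") (simp_all add: even_pairs_def left_odd_pairs_def right_odd_pairs_def)
  let ?w = "w(k := fst t, k + 1 := snd t)"
  have "contains ?w"
  proof (rule contains_last_pair_not_right_odd[of "k + 1"])
    show "string_y_sign n ?w = -1"
      using string_y_sign_fun_upd_pair[of k n] k same_pair_class_y_sign[OF cls] odd by simp
    show "(?w (k + 1), ?w (k + 1 + 1)) \<notin> right_odd_pairs"
      using last by (auto simp: t_def right_odd_pairs_def)
    show "\<forall>j>k + 1 + 1. ?w j = PI" using supp by simp
    show "?w (k + 1 + 1) \<noteq> PI" using last by auto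
  qed (use IH k in simp_all)
  then show ?thesis
    by (rule contains_if_pair_class[of w k "fst t" "snd t"]) (use k cls in simp_all)
qed

lemma contains_last_pair_IY:
  assumes IH: "\<And>v. string_y_sign n v = -1 \<Longrightarrow> \<forall>j>k + 1. v j = PI \<Longrightarrow> contains v"
    and k: "1 \<le> k" "k + 1 < n" and odd: "string_y_sign n w = -1" and supp: "\<forall>j>k + 2. w j = PI"
    and mid: "w (k + 1) = PI" and last: "w (k + 2) = PY"
  shows "contains w"
proof (cases "w k = PI")
  case True
  \<comment> \<open>Sites k, k+1, k+2 read I I Y; first trade the pair I Y for Y Z.\<close>
  let ?w = "w(k + 1 := PY, k + 2 := PZ)"
  have cls: "same_pair_class (PY, PZ) (w (k + 1), w (k + 1 + 1))"
    using mid last by (simp add: same_pair_class_def right_odd_pairs_def)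
  have "contains ?w"
  proof (rule contains_last_pair_YX_or_YZ[OF IH k])
    show "string_y_sign n ?w = -1"
      using string_y_sign_fun_upd_pair[of "k + 1" n] k same_pair_class_y_sign[OF cls] odd by simp
  qed (use supp in auto)
  then show ?thesis
    by (intro contains_if_pair_class[of w "k + 1" PY PZ]) (use k cls in simp_all)
next
  case False
  define t where "t = (if w k = PY then (PX, PY) else (PI, PX))"
  have cls: "same_pair_class t (w k, w (k + 1))"
    using False unfolding t_def same_pair_class_def mid
    by (cases "w k") (simp_all add: even_pairs_def left_odd_pairs_def right_odd_pairs_def)
  let ?w = "w(k := fst t, k + 1 := snd t)"
  have "contains ?w"
  proof (rule contains_last_pair_not_right_odd[of "k + 1"])
    show "string_y_sign n ?w = -1"
      using string_y_sign_fun_upd_pair[of k n] k same_pair_class_y_sign[OF cls] odd by simp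
    show "(?w (k + 1), ?w (k + 1 + 1)) \<notin> right_odd_pairs"
      using last by (auto simp: t_def right_odd_pairs_def)
    show "\<forall>j>k + 1 + 1. ?w j = PI" using supp by simp
    show "?w (k + 1 + 1) \<noteq> PI" using last by auto
  qed (use IH k in simp_all)
  then show ?thesis
    by (rule contains_if_pair_class[of w k "fst t" "snd t"]) (use k cls in simp_all)
qed

lemma contains_odd_supported_2:
  assumes n: "2 \<le> n" and odd: "string_y_sign n w = -1" and supp: "\<forall>j>2. w j = PI"
  shows "contains w"
proof -
  have "(\<Prod>k\<in>{1..n} - {1, 2}. y_sign (w k)) = 1"
    using supp by (intro prod.neutral) (auto simp: y_sign_def)
  then have "y_sign (w 1) * y_sign (w 2) = -1"
    using odd prod_atLeast1_atMost_pair[of 1 n "\<lambda>k. y_sign (w k)"] n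
    by (simp add: string_y_sign_def numeral_2_eq_2)
  then obtain g h where gen: "(g, h) \<in> a16_generator_pairs" and cls: "same_pair_class (g, h) (w 1, w 2)"
    unfolding a16_generator_pairs_def same_pair_class_def
    by (cases "w 1"; cases "w 2")
      (auto simp: y_sign_def even_pairs_def left_odd_pairs_def right_odd_pairs_def)
  have "contains ((two_site_string 1 g h)(1 := w 1, 1 + 1 := w 2))"
    using generators[of 1 g h] gen n cls by (intro contains_pair_class) (simp_all add: two_site_string_def)
  moreover have "pauli_string n ((two_site_string 1 g h)(1 := w 1, 1 + 1 := w 2)) = pauli_string n w"
    using supp by (intro pauli_string_cong) (auto simp: two_site_string_def numeral_2_eq_2)
  ultimately show ?thesis by simp
qed

lemma contains_odd_supported:
  assumes "2 \<le> m" "m \<le> n" and "string_y_sign n w = -1" and "\<forall>j>m. w j = PI"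
  shows "contains w"
  using assms
proof (induction m arbitrary: w rule: nat_induct_at_least)
  case base
  then show ?case by (intro contains_odd_supported_2) auto
next
  case (Suc m)
  define k where "k = m - 1"
  have k: "m = k + 1" "1 \<le> k" using Suc.hyps by (simp_all add: k_def)
  have IH: "\<And>v. string_y_sign n v = -1 \<Longrightarrow> \<forall>j>m. v j = PI \<Longrightarrow> contains v"
    using Suc by simp
  show ?case
  proof (cases "w (m + 1) = PI")
    case True
    have "\<forall>j>m. w j = PI"
    proof (intro allI impI)
      fix j assume "m < j"
      then show "w j = PI" using True Suc.prems(3) by (cases "j = m + 1") auto
    qed
    then show ?thesis using IH Suc.prems(2) by blast
  next
    case last: False
    consider "(w m, w (m + 1)) \<notin> right_odd_pairs" | "w m = PY" "w (m + 1) = PX \<or> w (m + 1) = PZ"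
      | "w m = PI" "w (m + 1) = PY"
      unfolding right_odd_pairs_def by auto
    then show ?thesis
    proof cases
      case 1
      then show ?thesis using last Suc.prems k by (intro contains_last_pair_not_right_odd[of m, OF IH]) auto
    next
      case 2
      then show ?thesis using Suc.prems k by (intro contains_last_pair_YX_or_YZ[of k, OF IH[unfolded k]]) auto
    next
      case 3
      then show ?thesis using Suc.prems k by (intro contains_last_pair_IY[of k, OF IH[unfolded k]]) auto
    qed
  qed
qed

lemma contains_odd_strings:
  assumes "2 \<le> n" and odd: "string_y_sign n P = -1"
  shows "contains P"
proof -
  define P' where "P' j = (if j \<le> n then P j else PI)" for j
  have "string_y_sign n P' = string_y_sign n P"
    unfolding string_y_sign_def P'_def by (intro prod.cong) auto
  then have "contains P'"
    using assms by (intro contains_odd_supported[of n]) (auto simp: P'_def)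
  moreover have "pauli_string n P' = pauli_string n P"
    by (intro pauli_string_cong) (simp add: P'_def)
  ultimately show ?thesis by simp
qed

end

lemma a16_eq_so_alg:
  assumes "2 \<le> n"
  shows "a16 n = so_alg (2 ^ n)"
  unfolding a16_def
proof (rule lie_gen_eqI[OF so_alg_real_lie_subalgebra])
  fix P assume "P \<in> (\<Union>j\<in>{1..n - 1}. {two_site n j PX PY, two_site n j PY PX, two_site n j PY PZ, two_site n j PZ PY})"
  then obtain j where j: "1 \<le> j" "j < n"
    and P: "P \<in> {two_site n j PX PY, two_site n j PY PX, two_site n j PY PZ, two_site n j PZ PY}"
    using assms by auto
  then show "\<i> \<cdot>\<^sub>m P \<in> so_alg (2 ^ n)"
    by (auto simp: two_site_eq_pauli_string string_y_sign_two_site[OF j] y_sign_def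
        intro!: odd_string_in_so_alg)
next
  fix L assume L: "real_lie_subalgebra (2 ^ n) L"
    and gens: "\<forall>P\<in>(\<Union>j\<in>{1..n - 1}. {two_site n j PX PY, two_site n j PY PX, two_site n j PY PZ, two_site n j PZ PY}).
      \<i> \<cdot>\<^sub>m P \<in> L"
  interpret a16_closed n L
  proof
    fix j g h assume "1 \<le> j" "j < n" "(g, h) \<in> a16_generator_pairs"
    then show "\<i> \<cdot>\<^sub>m pauli_string n (two_site_string j g h) \<in> L"
      using gens by (auto simp: a16_generator_pairs_def two_site_eq_pauli_string)
  qed (rule L)
  show "so_alg (2 ^ n) \<subseteq> L"
    using L contains_odd_strings[OF assms] by (rule so_alg_subset_if_odd_strings)
qed

theorem mainTheorem18:
  fixes n :: nat
  assumes "n \<ge> 3"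
  shows "a16 n = {g \<in> su_alg (2 ^ n). transpose_mat g = - g}
       \<and> {g \<in> su_alg (2 ^ n). transpose_mat g = - g} = so_alg (2 ^ n)"
  using a16_eq_so_alg[of n] su_alg_antisymmetric_eq_so_alg[of "2 ^ n"] assms by simp

end
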